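(* Let $q(m,n)=am^2+bmn+cn^2$ with $a,b,c\in\mathbb{Z}$ be an indefinite form whose discriminant $\Delta=b^2-4ac>0$ is not a perfect square, and let $\lambda>0$. For $k\in\mathbb{Z}$ let $A_k=\{(m,n)\in(\mathbb{Z}\setminus\{0\})\times\mathbb{Z}: q(m,n)=k\}$. Then there is a constant $C_\lambda$ depending only on $\lambda$ such that for every $k\in\mathbb{Z}$, $$\sum_{(m,n)\in A_k}\frac{1}{|m|^{\lambda}}\le C_{\lambda}\,\Delta^{(1+\lambda)/2}.$$ *)

theory Defs
  imports "HOL-Analysis.Analysis"
begin

end

theory Submission
  imports Defs "HOL-Computational_Algebra.Nth_Powers"
begin

(*
  Completing the square gives (2cn + bm)^2 - \<Delta> m^2 = 4c q(m, n). Since \<Delta> is not a square,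
  c \<noteq> 0 and q has no zero with m \<noteq> 0, so for k \<noteq> 0 every solution of q(m, n) = k yields a
  solution (u, |m|), u = |2cn + bm|, of u^2 - \<Delta> m^2 = K with K = 4ck, and each value of |m|
  comes from at most four pairs (m, n).

  Cut the m-axis into windows [\<rho>^j, \<rho>^(j+1)) with fixed 1 < \<rho> < sqrt \<Delta>. A solution (u, m)
  with g = gcd u m determines a square root r of \<Delta> modulo |K|/g^2 such that u/g = r m/g modulo
  K/g^2. Two reduced solutions in the same window with the same (g, r) have a cross term
  u1 m2 - u2 m1 divisible by K/g^2 but, by the identity
  2 sqrt \<Delta> (u1 m2 - u2 m1) V1 V2 = K (V2^2 - V1^2) with V = u + sqrt \<Delta> m, smaller than it in
  absolute value; hence they coincide. Counting the pairs (g, r) bounds a window by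
  2 sqrt \<Delta> d(|K|)^2, and the windows below (sqrt |K| / \<Delta>)^(1/2) contain at most one m.
  Summing m^(-\<lambda>) window by window against the divisor bound d(n) = O(n^\<epsilon>) gives C \<Delta>^((1+\<lambda>)/2).
*)

section \<open>Counting divisors\<close>

definition divisor_count :: "nat \<Rightarrow> nat" where
  "divisor_count n = card {d. d dvd n}"

lemma divisor_count_mono: "a dvd b \<Longrightarrow> b > 0 \<Longrightarrow> divisor_count a \<le> divisor_count b"
  unfolding divisor_count_def by (intro card_mono) (auto intro: dvd_trans)

lemma divisor_count_prime_power_mult:
  fixes p y :: nat
  assumes p: "prime p" and "\<not> p dvd y" and "y > 0"
  shows "divisor_count (p ^ a * y) = Suc a * divisor_count y"
proof -
  let ?f = "\<lambda>(i, e). p ^ i * e"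
  have "{d. d dvd p ^ a * y} = ?f ` ({..a} \<times> {e. e dvd y})"
  proof (intro equalityI subsetI)
    fix d assume "d \<in> {d. d dvd p ^ a * y}"
    then obtain x z where "d = x * z" "x dvd p ^ a" "z dvd y"
      by (auto elim: dvd_productE)
    then show "d \<in> ?f ` ({..a} \<times> {e. e dvd y})"
      using divides_primepow_nat[OF p] by force
  qed (auto simp: le_imp_power_dvd mult_dvd_mono)
  moreover have "inj_on ?f ({..a} \<times> {e. e dvd y})"
  proof (intro inj_onI, clarify)
    fix i e j f
    assume "e dvd y" "f dvd y" and eq: "p ^ i * e = p ^ j * f"
    then have "\<not> p dvd e" "\<not> p dvd f"
      using \<open>\<not> p dvd y\<close> dvd_trans by blast+
    have mult: "multiplicity p (p ^ k * x) = k" if "\<not> p dvd x" "x dvd y" for k x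
      using that p \<open>y > 0\<close>
      by (subst prime_elem_multiplicity_mult_distrib) (auto simp: not_dvd_imp_multiplicity_0)
    have "i = j"
      using mult[OF \<open>\<not> p dvd e\<close> \<open>e dvd y\<close>, of i] mult[OF \<open>\<not> p dvd f\<close> \<open>f dvd y\<close>, of j] eq
      by simp
    with eq p show "i = j \<and> e = f"
      by (simp add: prime_gt_0_nat)
  qed
  ultimately show ?thesis
    unfolding divisor_count_def by (simp add: card_image card_cartesian_product)
qed

lemma Suc_le_two_powr:
  fixes \<epsilon> :: real
  assumes "\<epsilon> > 0"
  shows "real (Suc a) \<le> (1 + 1 / (\<epsilon> * ln 2)) * 2 powr (a * \<epsilon>)"
proof -
  define L where "L = \<epsilon> * ln 2"
  have "L > 0" using assms by (simp add: L_def)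
  have "1 + a * L \<le> exp (a * L)" by (rule exp_ge_add_one_self)
  also have "\<dots> = 2 powr (a * \<epsilon>)" by (simp add: powr_def L_def algebra_simps)
  finally have "(1 + 1 / L) * (1 + a * L) \<le> (1 + 1 / L) * 2 powr (a * \<epsilon>)"
    using \<open>L > 0\<close> by (intro mult_left_mono) auto
  moreover have "real (Suc a) \<le> (1 + 1 / L) * (1 + a * L)"
    using \<open>L > 0\<close> by (simp add: field_simps)
  ultimately show ?thesis by (simp add: L_def)
qed

lemma Suc_le_powr_if_powr_ge_two:
  fixes \<epsilon> :: real
  assumes "real p powr \<epsilon> \<ge> 2"
  shows "real (Suc a) \<le> real p powr (a * \<epsilon>)"
proof -
  have "p \<noteq> 0" using assms by (cases "p = 0") auto
  have "real (Suc a) \<le> 2 ^ a" by (induction a) auto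
  also have "\<dots> \<le> (real p powr \<epsilon>) ^ a" using assms by (intro power_mono) auto
  also have "\<dots> = real p powr (a * \<epsilon>)"
    using \<open>p \<noteq> 0\<close> by (simp add: powr_powr powr_realpow' mult.commute flip: powr_realpow)
  finally show ?thesis .
qed

lemma Suc_mult_power_le_powr_mult_power:
  fixes \<epsilon> :: real and p a k k' :: nat
  assumes "\<epsilon> > 0" "p \<ge> 2" "k \<le> k'" "real p powr \<epsilon> < 2 \<Longrightarrow> Suc k \<le> k'"
  defines "B \<equiv> 1 + 1 / (\<epsilon> * ln 2)"
  shows "real (Suc a) * B ^ k \<le> real p powr (a * \<epsilon>) * B ^ k'"
proof -
  have "B \<ge> 1" using assms(1) by (simp add: B_def)
  show ?thesis
  proof (cases "real p powr \<epsilon> < 2")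
    case True
    have "real (Suc a) \<le> B * 2 powr (a * \<epsilon>)"
      using Suc_le_two_powr[OF assms(1), of a] by (simp add: B_def)
    then have "real (Suc a) * B ^ k \<le> (B * 2 powr (a * \<epsilon>)) * B ^ k"
      using \<open>B \<ge> 1\<close> by (intro mult_right_mono) auto
    also have "\<dots> \<le> (B * real p powr (a * \<epsilon>)) * B ^ k"
      using assms(1,2) \<open>B \<ge> 1\<close> by (intro mult_right_mono mult_left_mono powr_mono2) auto
    also have "\<dots> = real p powr (a * \<epsilon>) * B ^ Suc k" by simp
    also have "\<dots> \<le> real p powr (a * \<epsilon>) * B ^ k'"
      using True assms(4) \<open>B \<ge> 1\<close> by (intro mult_left_mono power_increasing) auto
    finally show ?thesis .
  next
    case False
    then show ?thesis
      using Suc_le_powr_if_powr_ge_two[of p \<epsilon> a] \<open>B \<ge> 1\<close> assms(3)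
      by (intro mult_mono power_increasing) auto
  qed
qed

lemma prime_power_factorE:
  fixes n :: nat
  assumes "n > 1"
  obtains p a y where "prime p" "p dvd n" "n = p ^ a * y" "\<not> p dvd y" "0 < y" "y < n"
proof -
  obtain p where p: "prime p" "p dvd n" using prime_factor_nat assms by (metis less_irrefl)
  define a where "a = multiplicity p n"
  obtain y where y: "n = p ^ a * y" "\<not> p dvd y"
    unfolding a_def
    by (rule multiplicity_decompose'[of n p]) (use assms p(1) not_prime_unit in auto)
  have "y > 0" using y(1) assms by (auto intro: gr0I)
  have "a \<ge> 1"
    using p assms by (simp add: a_def Suc_le_eq prime_multiplicity_gt_zero_iff)
  then have "p ^ a > 1"
    using prime_ge_2_nat[OF p(1)] by (metis One_nat_def Suc_1 Suc_le_eq Suc_le_lessD not_one_le_zero one_less_power)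
  then have "y < n" using y(1) \<open>y > 0\<close> by simp
  with p y \<open>y > 0\<close> show thesis by (rule that)
qed

lemma divisor_count_le_powr_mult_small_primes:
  fixes \<epsilon> :: real
  assumes "\<epsilon> > 0" and "n > 0"
  shows "real (divisor_count n)
           \<le> real n powr \<epsilon> * (1 + 1 / (\<epsilon> * ln 2)) ^ card {p. prime p \<and> p dvd n \<and> real p powr \<epsilon> < 2}"
  using \<open>n > 0\<close>
proof (induction n rule: less_induct)
  case (less n)
  define B where "B = 1 + 1 / (\<epsilon> * ln 2)"
  define S where "S = (\<lambda>n::nat. {p. prime p \<and> p dvd n \<and> real p powr \<epsilon> < 2})"
  show ?case
  proof (cases "n = 1")
    case True
    then show ?thesis using \<open>\<epsilon> > 0\<close> by (simp add: divisor_count_def)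
  next
    case False
    then obtain p a y where p: "prime p" "p dvd n" and y: "n = p ^ a * y" "\<not> p dvd y" "0 < y" "y < n"
      using prime_power_factorE[of n] less.prems by (metis One_nat_def less_one nat_neq_iff)
    have "p \<ge> 2" using p prime_ge_2_nat by blast
    have "finite (S n)"
      unfolding S_def using less.prems by (auto intro: finite_subset[of _ "{..n}"] dest: dvd_imp_le)
    have "S y \<subseteq> S n" "p \<notin> S y"
      unfolding S_def using y dvd_trans by auto
    have cards: "card (S y) \<le> card (S n)" "real p powr \<epsilon> < 2 \<Longrightarrow> Suc (card (S y)) \<le> card (S n)"
    proof -
      show "card (S y) \<le> card (S n)" using \<open>finite (S n)\<close> \<open>S y \<subseteq> S n\<close> by (rule card_mono)
      assume "real p powr \<epsilon> < 2"
      then have "insert p (S y) \<subseteq> S n" using p \<open>S y \<subseteq> S n\<close> by (auto simp: S_def)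
      then have "card (insert p (S y)) \<le> card (S n)" using \<open>finite (S n)\<close> by (rule card_mono[rotated])
      then show "Suc (card (S y)) \<le> card (S n)"
        using finite_subset[OF \<open>S y \<subseteq> S n\<close> \<open>finite (S n)\<close>] \<open>p \<notin> S y\<close> by simp
    qed
    have "real (divisor_count n) = real (Suc a) * real (divisor_count y)"
      using divisor_count_prime_power_mult[OF p(1) y(2,3), of a] y(1)
      by (simp only: of_nat_mult)
    also have "\<dots> \<le> real (Suc a) * (real y powr \<epsilon> * B ^ card (S y))"
      using less.IH[OF y(4,3)] by (intro mult_left_mono) (simp_all add: S_def B_def)
    also have "\<dots> = real y powr \<epsilon> * (real (Suc a) * B ^ card (S y))" by simp
    also have "\<dots> \<le> real y powr \<epsilon> * (real p powr (a * \<epsilon>) * B ^ card (S n))"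
      using Suc_mult_power_le_powr_mult_power[OF \<open>\<epsilon> > 0\<close> \<open>p \<ge> 2\<close> cards]
      by (intro mult_left_mono) (simp_all add: B_def)
    also have "\<dots> = real n powr \<epsilon> * B ^ card (S n)"
      using y(1) \<open>p \<ge> 2\<close> by (simp add: powr_mult powr_powr flip: powr_realpow)
    finally show ?thesis by (simp add: S_def B_def)
  qed
qed

lemma divisor_count_le_powr:
  fixes \<epsilon> :: real
  assumes "\<epsilon> > 0"
  obtains C where "\<And>n. n > 0 \<Longrightarrow> real (divisor_count n) \<le> C * real n powr \<epsilon>"
proof
  define B where "B = 1 + 1 / (\<epsilon> * ln 2)"
  define N where "N = nat \<lceil>2 powr (1 / \<epsilon>)\<rceil>"
  fix n :: nat assume "n > 0"
  let ?S = "{p. prime p \<and> p dvd n \<and> real p powr \<epsilon> < 2}"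
  have "?S \<subseteq> {..N}"
  proof
    fix p assume "p \<in> ?S"
    then have "prime p" "real p powr \<epsilon> < 2" by auto
    then have "real p = (real p powr \<epsilon>) powr (1 / \<epsilon>)"
      using \<open>\<epsilon> > 0\<close> by (simp add: powr_powr prime_gt_0_nat)
    also have "\<dots> \<le> 2 powr (1 / \<epsilon>)"
      using \<open>real p powr \<epsilon> < 2\<close> \<open>\<epsilon> > 0\<close> by (intro powr_mono2) auto
    also have "\<dots> \<le> real N" unfolding N_def by linarith
    finally show "p \<in> {..N}" by simp
  qed
  then have "B ^ card ?S \<le> B ^ Suc N"
    using \<open>\<epsilon> > 0\<close> card_mono[of "{..N}" ?S] by (intro power_increasing) (auto simp: B_def)
  then have "real n powr \<epsilon> * B ^ card ?S \<le> B ^ Suc N * real n powr \<epsilon>"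
    by (subst mult.commute) (rule mult_right_mono, simp_all)
  then show "real (divisor_count n) \<le> B ^ Suc N * real n powr \<epsilon>"
    using divisor_count_le_powr_mult_small_primes[OF \<open>\<epsilon> > 0\<close> \<open>n > 0\<close>]
    unfolding B_def[symmetric] by linarith
qed

section \<open>Square roots modulo n\<close>

definition sqrts_mod :: "int \<Rightarrow> int \<Rightarrow> int set" where
  "sqrts_mod D n = {r. 0 \<le> r \<and> r < n \<and> n dvd r^2 - D}"

lemma finite_sqrts_mod [simp]: "finite (sqrts_mod D n)"
  unfolding sqrts_mod_def by (rule finite_subset[of _ "{0..<n}"]) auto

lemma finite_pos_divisors_int:
  fixes n :: int
  assumes "n > 0"
  shows "finite {d. d > 0 \<and> d dvd n}"
  using assms by (auto intro: finite_subset[of _ "{0..n}"] dest: zdvd_imp_le)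

lemma card_pos_divisors_int:
  fixes n :: int
  assumes "n > 0"
  shows "card {d. d > 0 \<and> d dvd n} = divisor_count (nat n)"
proof -
  have "{d. d > 0 \<and> d dvd n} = int ` {d. d dvd nat n}"
  proof (intro equalityI subsetI)
    fix d assume "d \<in> {d. d > 0 \<and> d dvd n}"
    then show "d \<in> int ` {d. d dvd nat n}"
      using assms by (auto simp: nat_dvd_iff intro!: image_eqI[of _ _ "nat d"])
  next
    fix d assume "d \<in> int ` {d. d dvd nat n}"
    then obtain k where "k dvd nat n" "d = int k" by auto
    moreover from this have "k \<noteq> 0" using assms by (auto intro: Nat.gr0I)
    ultimately show "d \<in> {d. d > 0 \<and> d dvd n}"
      using assms by (auto simp flip: int_dvd_int_iff)
  qed
  then show ?thesis unfolding divisor_count_def by (simp add: card_image)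
qed

lemma card_le_if_pairwise_congruent:
  fixes S :: "int set" and M h :: int
  assumes "M > 0" and "S \<subseteq> {0..<M * h}" and "\<And>r r'. r \<in> S \<Longrightarrow> r' \<in> S \<Longrightarrow> M dvd r - r'"
  shows "card S \<le> nat h"
proof -
  have "inj_on (\<lambda>r. r div M) S"
  proof (rule inj_onI)
    fix r r' assume "r \<in> S" "r' \<in> S" "r div M = r' div M"
    with assms(3)[of r r'] show "r = r'"
      by (metis div_mult_mod_eq mod_eq_dvd_iff)
  qed
  moreover have "r div M \<in> {0..<h}" if "r \<in> S" for r
  proof -
    have "0 \<le> r" "r < M * h" using that assms(2) by auto
    moreover have "M * (r div M) \<le> r"
      using assms(1) by (metis le_add_same_cancel1 mult_div_mod_eq pos_mod_sign)
    ultimately have "M * (r div M) < M * h" by linarith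
    with \<open>0 \<le> r\<close> show ?thesis
      using assms(1) by (simp add: pos_imp_zdiv_nonneg_iff mult_less_cancel_left_pos)
  qed
  then have "(\<lambda>r. r div M) ` S \<subseteq> {0..<h}" by auto
  ultimately have "card S \<le> card {0..<h}"
    by (metis card_image card_mono finite_atLeastLessThan_int)
  then show ?thesis by simp
qed

lemma quotient_dvd_add_if_gcd_diff_eq:
  fixes n r s D :: int
  assumes "n dvd r^2 - D" "n dvd s^2 - D" and d: "gcd (r - s) n = d" "d > 0"
  shows "n div d dvd r + s"
proof -
  define e where "e = n div d"
  have "n = d * e" using d by (metis e_def gcd_dvd2 dvd_mult_div_cancel)
  obtain a where a: "r - s = d * a" using d by (metis gcd_dvd1 dvd_def)
  have "d * gcd a e = d" using d a \<open>n = d * e\<close> by (simp add: gcd_mult_left)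
  then have "coprime e a" using d by (simp add: coprime_iff_gcd_eq_1 gcd.commute)
  have "n dvd (r^2 - D) - (s^2 - D)" using assms(1,2) by (rule dvd_diff)
  then have "d * e dvd (d * a) * (r + s)"
    using \<open>n = d * e\<close> a by (simp add: power2_eq_square algebra_simps)
  then have "e dvd a * (r + s)" using d by (simp add: mult.assoc)
  then show ?thesis
    using \<open>coprime e a\<close> by (simp add: e_def coprime_dvd_mult_right_iff)
qed

lemma abs_le_two_sqrt_if_square_dvd:
  fixes h r s D :: int
  assumes "h dvd r - s" "h dvd r + s" "h^2 dvd s^2 - D" "D > 0"
  shows "real_of_int \<bar>h\<bar> \<le> 2 * sqrt (real_of_int D)"
proof -
  have "h dvd (r + s) - (r - s)" using assms(1,2) by (rule dvd_diff[rotated])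
  then have "h^2 dvd (2 * s)^2" by (intro dvd_power_same) simp
  moreover have "h^2 dvd 4 * (s^2 - D)" using assms(3) by (rule dvd_mult)
  ultimately have "h^2 dvd (2 * s)^2 - 4 * (s^2 - D)" by (rule dvd_diff)
  then have "h^2 dvd 4 * D" by (simp add: power_mult_distrib)
  then have "h^2 \<le> 4 * D" using assms(4) by (intro zdvd_imp_le) auto
  then have "real_of_int \<bar>h\<bar> ^ 2 \<le> 4 * real_of_int D"
    by (metis of_int_le_iff of_int_mult of_int_numeral of_int_power power2_abs)
  then have "real_of_int \<bar>h\<bar> \<le> sqrt (4 * real_of_int D)" by (rule real_le_rsqrt)
  then show ?thesis by (simp add: real_sqrt_mult)
qed

(* The roots r with gcd (r - s) n = d satisfy d dvd r - s and n div d dvd r + s, so they are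
   congruent modulo lcm d (n div d) = n div h, h = gcd d (n div d), and h^2 divides 4 D. *)
lemma card_sqrts_mod_gcd_diff_le:
  fixes D n s d :: int
  assumes "D > 0" and s: "s \<in> sqrts_mod D n"
  shows "real (card {r \<in> sqrts_mod D n. gcd (r - s) n = d}) \<le> 2 * sqrt (real_of_int D)"
proof (cases "{r \<in> sqrts_mod D n. gcd (r - s) n = d} = {}")
  case True
  then show ?thesis using \<open>D > 0\<close> by (subst True) simp
next
  case False
  define F where "F = {r \<in> sqrts_mod D n. gcd (r - s) n = d}"
  then obtain r1 where "r1 \<in> F" using False by auto
  have "n > 0" using s by (simp add: sqrts_mod_def)
  have "d > 0" "d dvd n" using \<open>r1 \<in> F\<close> \<open>n > 0\<close> by (auto simp: F_def)
  define e where "e = n div d"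
  have "n = d * e" using \<open>d dvd n\<close> by (simp add: e_def)
  have "e > 0" using \<open>n > 0\<close> \<open>d > 0\<close> \<open>n = d * e\<close> by (simp add: zero_less_mult_iff)
  have dvd: "d dvd r - s \<and> e dvd r + s" if "r \<in> F" for r
    using that s quotient_dvd_add_if_gcd_diff_eq[of n r D s d] \<open>d > 0\<close>
    by (auto simp: F_def sqrts_mod_def e_def)
  define h where "h = gcd d e"
  define M where "M = lcm d e"
  have "M * h = n"
    using prod_gcd_lcm_int[of d e] \<open>d > 0\<close> \<open>e > 0\<close> \<open>n = d * e\<close> by (simp add: M_def h_def)
  have "M > 0" using \<open>d > 0\<close> \<open>e > 0\<close> by (simp add: M_def lcm_pos_int)
  have "M dvd r - r'" if "r \<in> F" "r' \<in> F" for r r'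
  proof -
    have "d dvd (r - s) - (r' - s)" "e dvd (r + s) - (r' + s)"
      using dvd[OF that(1)] dvd[OF that(2)] by (meson dvd_diff)+
    then show ?thesis by (simp add: M_def)
  qed
  moreover have "F \<subseteq> {0..<M * h}"
    using \<open>M * h = n\<close> by (auto simp: F_def sqrts_mod_def)
  ultimately have "card F \<le> nat h"
    using card_le_if_pairwise_congruent[OF \<open>M > 0\<close>] by blast
  moreover have "real_of_int \<bar>h\<bar> \<le> 2 * sqrt (real_of_int D)"
  proof (rule abs_le_two_sqrt_if_square_dvd)
    show "h dvd r1 - s" "h dvd r1 + s"
      using dvd[OF \<open>r1 \<in> F\<close>] by (auto simp: h_def intro: dvd_trans)
    have "h^2 dvd n" using \<open>n = d * e\<close> by (simp add: h_def power2_eq_square mult_dvd_mono)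
    then show "h^2 dvd s^2 - D" using s by (auto simp: sqrts_mod_def intro: dvd_trans)
  qed fact
  ultimately show ?thesis by (simp add: F_def)
qed

lemma card_sqrts_mod_le:
  fixes D n :: int
  assumes "D > 0" "n > 0"
  shows "real (card (sqrts_mod D n)) \<le> 2 * sqrt (real_of_int D) * real (divisor_count (nat n))"
proof (cases "sqrts_mod D n = {}")
  case False
  then obtain s where s: "s \<in> sqrts_mod D n" by auto
  define Dvs where "Dvs = {d. d > 0 \<and> d dvd n}"
  have "finite Dvs"
    unfolding Dvs_def using \<open>n > 0\<close> by (rule finite_pos_divisors_int)
  have "(\<lambda>r. gcd (r - s) n) ` sqrts_mod D n \<subseteq> Dvs"
    using \<open>n > 0\<close> by (auto simp: Dvs_def)
  then have "real (card (sqrts_mod D n)) = (\<Sum>d\<in>Dvs. real (card {r \<in> sqrts_mod D n. gcd (r - s) n = d}))"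
    using sum.group[OF finite_sqrts_mod \<open>finite Dvs\<close>, of _ D n "\<lambda>_. 1::real"] by simp
  also have "\<dots> \<le> (\<Sum>d\<in>Dvs. 2 * sqrt (real_of_int D))"
    by (intro sum_mono card_sqrts_mod_gcd_diff_le assms(1) s)
  also have "\<dots> = 2 * sqrt (real_of_int D) * real (divisor_count (nat n))"
    using card_pos_divisors_int[OF \<open>n > 0\<close>] by (simp add: Dvs_def)
  finally show ?thesis .
qed (use assms in simp)

section \<open>Solutions of u^2 - D m^2 = K in a window\<close>

definition pell_ms :: "int \<Rightarrow> int \<Rightarrow> int set" where
  "pell_ms D K = {m. 1 \<le> m \<and> (\<exists>u. 0 \<le> u \<and> u^2 - D * m^2 = K)}"

definition pell_u :: "int \<Rightarrow> int \<Rightarrow> int \<Rightarrow> int" where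
  "pell_u D K m = (SOME u. 0 \<le> u \<and> u^2 - D * m^2 = K)"

lemma pell_u_spec:
  assumes "m \<in> pell_ms D K"
  shows "1 \<le> m" "0 \<le> pell_u D K m" "(pell_u D K m)^2 - D * m^2 = K"
proof -
  show "1 \<le> m" using assms by (simp add: pell_ms_def)
  obtain u where "0 \<le> u \<and> u^2 - D * m^2 = K" using assms by (auto simp: pell_ms_def)
  then have "0 \<le> pell_u D K m \<and> (pell_u D K m)^2 - D * m^2 = K"
    unfolding pell_u_def by (rule someI)
  then show "0 \<le> pell_u D K m" "(pell_u D K m)^2 - D * m^2 = K" by auto
qed

lemma pell_conj_mono:
  fixes t K u1 m1 u2 m2 :: real
  assumes "0 < t" "0 \<le> m1" "m1 \<le> m2" "u1^2 - t^2 * m1^2 = K" "u2^2 - t^2 * m2^2 = K" "0 \<le> u2"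
  shows "u1 + t * m1 \<le> u2 + t * m2"
proof -
  have "t^2 * m1^2 \<le> t^2 * m2^2"
    using assms(2,3) by (intro mult_left_mono power_mono) auto
  then have "u1^2 \<le> u2^2" using assms(4,5) by linarith
  then have "u1 \<le> u2" using assms(6) by (rule power2_le_imp_le)
  moreover have "t * m1 \<le> t * m2" using assms(1,3) by (intro mult_left_mono) auto
  ultimately show ?thesis by simp
qed

lemma pell_conj_le_of_ratio_le:
  fixes \<rho> t K u1 m1 u2 m2 :: real
  assumes "1 \<le> \<rho>" "0 < t" "0 \<le> u1" "0 \<le> m1" "u1^2 - t^2 * m1^2 = K"
    and "0 \<le> m2" "m2 \<le> \<rho> * m1" "u2^2 - t^2 * m2^2 = K"
  shows "u2 + t * m2 \<le> 2 * \<rho> * (u1 + t * m1)"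
proof -
  have tm: "t * m2 \<le> \<rho> * (t * m1)"
    using assms(2,7) mult_left_mono[of m2 "\<rho> * m1" t] by (simp add: ac_simps)
  show ?thesis
  proof (cases "K \<ge> 0")
    case True
    have "t^2 * m2^2 \<le> t^2 * (\<rho> * m1)^2"
      using assms(6,7) by (intro mult_left_mono power_mono) auto
    also have "\<dots> = \<rho>^2 * (t^2 * m1^2)" by (simp add: power_mult_distrib ac_simps)
    finally have u2_sq: "u2^2 \<le> K + \<rho>^2 * (t^2 * m1^2)" using assms(8) by linarith
    have "K \<le> \<rho>^2 * K"
      using mult_right_mono[of 1 "\<rho>^2" K] True assms(1) by (simp add: one_le_power)
    then have "K + \<rho>^2 * (t^2 * m1^2) \<le> \<rho>^2 * (K + t^2 * m1^2)"
      by (simp add: distrib_left)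
    also have "\<dots> = (\<rho> * u1)^2"
      using assms(5) by (simp add: power_mult_distrib)
    finally have "u2^2 \<le> (\<rho> * u1)^2" using u2_sq by linarith
    then have "u2 \<le> \<rho> * u1" by (rule power2_le_imp_le) (use assms(1,3) in simp)
    with tm have "u2 + t * m2 \<le> \<rho> * (u1 + t * m1)" by (simp add: distrib_left)
    moreover have "0 \<le> \<rho> * (u1 + t * m1)" using assms(1-4) by simp
    ultimately show ?thesis by linarith
  next
    case False
    have "(t * m2)^2 = t^2 * m2^2" by (simp add: power_mult_distrib)
    then have "u2^2 \<le> (t * m2)^2" using assms(8) False by linarith
    then have "u2 \<le> t * m2" by (rule power2_le_imp_le) (use assms(2,6) in simp)
    moreover have "\<rho> * (t * m1) \<le> \<rho> * (u1 + t * m1)"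
      using assms(1,3) by (intro mult_left_mono) auto
    ultimately show ?thesis using tm by simp
  qed
qed

(* With V = u + t m, the identity 2 t (u1 m2 - u2 m1) V1 V2 = K (V2^2 - V1^2) together with
   V1 \<le> V2 \<le> 2 \<rho> V1 bounds the cross term. *)
lemma pell_cross_term_bound:
  fixes t \<rho> L K u1 m1 u2 m2 :: real
  assumes "0 \<le> \<rho>" "\<rho> < t"
    and "0 \<le> u1" "1 \<le> m1" "u1^2 - t^2 * m1^2 = K"
    and "0 \<le> u2" "m1 \<le> m2" "u2^2 - t^2 * m2^2 = K"
    and "L \<le> m1" "m2 < \<rho> * L"
  shows "t * \<bar>u1 * m2 - u2 * m1\<bar> \<le> \<rho> * \<bar>K\<bar>"
proof -
  define V1 where "V1 = u1 + t * m1"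
  define V2 where "V2 = u2 + t * m2"
  have "t > 0" "V1 > 0" using assms by (auto simp: V1_def add_nonneg_pos)
  have "L > 0"
  proof (rule ccontr)
    assume "\<not> L > 0"
    then have "\<rho> * L \<le> 0" using \<open>0 \<le> \<rho>\<close> by (simp add: mult_nonneg_nonpos)
    then show False using assms by linarith
  qed
  have "1 * L < \<rho> * L" using assms by linarith
  then have "\<rho> > 1" using \<open>L > 0\<close> by (simp add: mult_less_cancel_right)
  have "\<rho> * L \<le> \<rho> * m1" using assms by (intro mult_left_mono)
  then have "m2 \<le> \<rho> * m1" using assms by linarith
  have "V1 \<le> V2" "V2 \<le> 2 * \<rho> * V1"
    using pell_conj_mono[OF \<open>t > 0\<close> _ assms(7,5,8,6)]
      pell_conj_le_of_ratio_le[OF _ \<open>t > 0\<close> assms(3) _ assms(5) _ \<open>m2 \<le> \<rho> * m1\<close> assms(8)]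
      \<open>\<rho> > 1\<close> assms(4,7) by (simp_all add: V1_def V2_def)
  have "2 * t * (u1 * m2 - u2 * m1) * V1 * V2 = (u1^2 - t^2 * m1^2) * V2^2 - (u2^2 - t^2 * m2^2) * V1^2"
    unfolding V1_def V2_def by (simp add: algebra_simps power2_eq_square)
  also have "\<dots> = K * (V2^2 - V1^2)" using assms(5,8) by (simp add: algebra_simps)
  finally have iden: "2 * t * (u1 * m2 - u2 * m1) * V1 * V2 = K * (V2^2 - V1^2)" .
  have "V1^2 \<le> V2^2" using \<open>V1 > 0\<close> \<open>V1 \<le> V2\<close> by (intro power_mono) auto
  have "(2 * t * \<bar>u1 * m2 - u2 * m1\<bar>) * (V1 * V2) = \<bar>2 * t * (u1 * m2 - u2 * m1) * V1 * V2\<bar>"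
    using \<open>V1 > 0\<close> \<open>V1 \<le> V2\<close> \<open>t > 0\<close> by (simp add: abs_mult)
  also have "\<dots> = \<bar>K\<bar> * (V2^2 - V1^2)"
    using \<open>V1^2 \<le> V2^2\<close> by (simp add: iden abs_mult)
  also have "\<dots> \<le> \<bar>K\<bar> * (V2 * V2)" by (intro mult_left_mono) (auto simp: power2_eq_square)
  also have "\<dots> \<le> \<bar>K\<bar> * ((2 * \<rho> * V1) * V2)"
    using \<open>V2 \<le> 2 * \<rho> * V1\<close> \<open>V1 \<le> V2\<close> \<open>V1 > 0\<close> by (intro mult_left_mono mult_right_mono) auto
  also have "\<dots> = (2 * \<rho> * \<bar>K\<bar>) * (V1 * V2)" by (simp add: algebra_simps)
  finally show ?thesis using \<open>V1 > 0\<close> \<open>V1 \<le> V2\<close> by (simp add: mult_le_cancel_right_pos)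
qed

lemma pell_m_eq_if_cross_eq:
  fixes D K u1 m1 u2 m2 :: int
  assumes "K \<noteq> 0" "u1^2 - D * m1^2 = K" "u2^2 - D * m2^2 = K" "u1 * m2 = u2 * m1"
    and "m1 \<ge> 0" "m2 \<ge> 0"
  shows "m1 = m2"
proof -
  have "u1^2 * m2^2 = u2^2 * m1^2" using assms(4) by (metis power_mult_distrib)
  then have "(K + D * m1^2) * m2^2 = (K + D * m2^2) * m1^2" using assms(2,3) by (simp add: algebra_simps)
  then have "K * m2^2 = K * m1^2" by (simp add: algebra_simps)
  then show ?thesis using assms(1,5,6) by (simp add: power2_eq_iff_nonneg)
qed

lemma pell_window_unique:
  fixes D K u1 m1 u2 m2 :: int and L \<rho> :: real
  assumes "0 \<le> \<rho>" "\<rho>^2 < D" "K \<noteq> 0"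
    and "0 \<le> u1" "1 \<le> m1" "u1^2 - D * m1^2 = K"
    and "0 \<le> u2" "1 \<le> m2" "u2^2 - D * m2^2 = K"
    and "K dvd u1 * m2 - u2 * m1"
    and "L \<le> m1" "m1 < \<rho> * L" "L \<le> m2" "m2 < \<rho> * L"
  shows "m1 = m2"
proof -
  define t where "t = sqrt (real_of_int D)"
  have "\<rho> < t" unfolding t_def using assms(2) by (simp add: real_less_rsqrt)
  have "0 < real_of_int D" using assms(2) zero_le_power2[of \<rho>] by linarith
  then have "t^2 = real_of_int D" unfolding t_def by simp
  then have eq: "real_of_int u1^2 - t^2 * real_of_int m1^2 = real_of_int K"
    "real_of_int u2^2 - t^2 * real_of_int m2^2 = real_of_int K"
    using assms(6,9) by (metis of_int_diff of_int_mult of_int_power)+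
  have cross: "t * \<bar>real_of_int (u1 * m2 - u2 * m1)\<bar> \<le> \<rho> * \<bar>real_of_int K\<bar>"
  proof (cases "m1 \<le> m2")
    case True
    then show ?thesis
      using pell_cross_term_bound[OF assms(1) \<open>\<rho> < t\<close> _ _ eq(1) _ _ eq(2)] assms by simp
  next
    case False
    then show ?thesis
      using pell_cross_term_bound[OF assms(1) \<open>\<rho> < t\<close> _ _ eq(2) _ _ eq(1)] assms
      by (simp add: abs_minus_commute)
  qed
  have "u1 * m2 - u2 * m1 = 0"
  proof (rule ccontr)
    assume "u1 * m2 - u2 * m1 \<noteq> 0"
    then have "\<bar>K\<bar> \<le> \<bar>u1 * m2 - u2 * m1\<bar>" using assms(10) by (simp add: dvd_imp_le_int)
    then have "\<rho> * \<bar>real_of_int K\<bar> \<le> \<rho> * \<bar>real_of_int (u1 * m2 - u2 * m1)\<bar>"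
      using assms(1) by (intro mult_left_mono) linarith+
    moreover have "0 < \<bar>real_of_int (u1 * m2 - u2 * m1)\<bar>"
      using \<open>u1 * m2 - u2 * m1 \<noteq> 0\<close> by (simp only: zero_less_abs_iff of_int_eq_0_iff not_False_eq_True)
    then have "\<rho> * \<bar>real_of_int (u1 * m2 - u2 * m1)\<bar> < t * \<bar>real_of_int (u1 * m2 - u2 * m1)\<bar>"
      by (rule mult_strict_right_mono[OF \<open>\<rho> < t\<close>])
    ultimately show False using cross by linarith
  qed
  then show ?thesis
    using pell_m_eq_if_cross_eq[OF assms(3,6,9)] assms(5,8) by simp
qed

lemma coprime_pell_m_rhs:
  fixes D K u m :: int
  assumes "coprime u m" "u^2 - D * m^2 = K"
  shows "coprime m K"
proof (rule coprimeI)
  fix c assume "c dvd m" "c dvd K"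
  then have "c dvd K + D * m^2" by (simp add: power2_eq_square)
  moreover have "K + D * m^2 = u^2" using assms(2) by simp
  ultimately have "c dvd u^2" by simp
  then show "is_unit c"
    using \<open>c dvd m\<close> assms(1) by (metis coprime_common_divisor coprime_power_left_iff)
qed

lemma pell_root_exists:
  fixes K u m :: int
  assumes "coprime m K" "K \<noteq> 0"
  obtains r where "0 \<le> r" "r < \<bar>K\<bar>" "K dvd u - r * m"
proof -
  obtain a b where "a * m + b * K = 1"
    using bezout_int[of m K] assms(1) by auto
  define r where "r = (u * a) mod \<bar>K\<bar>"
  have "\<bar>K\<bar> dvd u * a - r" by (simp add: r_def mod_eq_dvd_iff[symmetric] mod_mod_trivial)
  moreover have "(u * a - r) * m + u * b * K = u * (a * m + b * K) - r * m"
    by (simp add: algebra_simps)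
  then have "u - r * m = (u * a - r) * m + u * b * K" using \<open>a * m + b * K = 1\<close> by simp
  ultimately have "K dvd u - r * m" by simp
  moreover have "0 \<le> r" "r < \<bar>K\<bar>" using assms(2) by (simp_all add: r_def)
  ultimately show thesis using that by blast
qed

lemma pell_root_in_sqrts_mod:
  fixes D K u m r :: int
  assumes "u^2 - D * m^2 = K" "coprime m K" "K dvd u - r * m" "0 \<le> r" "r < \<bar>K\<bar>"
  shows "r \<in> sqrts_mod D \<bar>K\<bar>"
proof -
  have "(r^2 - D) * m^2 = (r * m - u) * (r * m + u) + K"
    using assms(1) by (simp add: algebra_simps power2_eq_square)
  moreover have "K dvd (r * m - u) * (r * m + u)"
    using assms(3) by (metis dvd_minus_iff dvd_mult2 minus_diff_eq)
  ultimately have "K dvd (r^2 - D) * m^2" by simp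
  then have "K dvd r^2 - D"
    using assms(2) by (simp add: coprime_commute coprime_dvd_mult_left_iff)
  then show ?thesis using assms(4,5) by (simp add: sqrts_mod_def)
qed

lemma pell_primitive_part:
  fixes D K u m :: int
  assumes "1 \<le> m" "0 \<le> u" "u^2 - D * m^2 = K"
  defines "g \<equiv> gcd u m"
  shows "g > 0" "m = g * (m div g)" "0 \<le> u div g" "1 \<le> m div g" "g^2 dvd K"
    and "(u div g)^2 - D * (m div g)^2 = K div g^2" "coprime (u div g) (m div g)"
proof -
  show "g > 0" using assms(1) by (simp add: g_def)
  show m: "m = g * (m div g)" by (simp add: g_def)
  have u: "u = g * (u div g)" by (simp add: g_def)
  show "0 \<le> u div g" using assms(2) \<open>g > 0\<close> by (simp add: pos_imp_zdiv_nonneg_iff)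
  have "g \<le> m" using assms(1) by (simp add: g_def zdvd_imp_le)
  then have "0 < m div g" using \<open>g > 0\<close> by (simp add: pos_imp_zdiv_pos_iff)
  then show "1 \<le> m div g" by simp
  have K: "K = g^2 * ((u div g)^2 - D * (m div g)^2)"
    using assms(3) u m by (metis (no_types, opaque_lifting) mult.left_commute power_mult_distrib right_diff_distrib)
  then show "(u div g)^2 - D * (m div g)^2 = K div g^2" using \<open>g > 0\<close> by simp
  from K show "g^2 dvd K" by simp
  show "coprime (u div g) (m div g)" using assms(1) by (simp add: g_def div_gcd_coprime)
qed

(* The class of a solution (u, m): g = gcd u m and the residue r with u/g = r m/g modulo K/g^2,
   a square root of D modulo |K|/g^2. *)
definition pell_class :: "int \<Rightarrow> int \<Rightarrow> int \<Rightarrow> int \<times> int" where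
  "pell_class K u m = (let g = gcd u m; K' = K div g^2 in
     (g, SOME r. 0 \<le> r \<and> r < \<bar>K'\<bar> \<and> K' dvd u div g - r * (m div g)))"

lemma pell_class_spec:
  fixes D K u m :: int
  assumes "K \<noteq> 0" "1 \<le> m" "0 \<le> u" "u^2 - D * m^2 = K"
  defines "g \<equiv> gcd u m" and "r \<equiv> snd (pell_class K u m)"
  shows "fst (pell_class K u m) = g" "r \<in> sqrts_mod D (\<bar>K\<bar> div g^2)"
    and "K div g^2 dvd u div g - r * (m div g)"
proof -
  note prim = pell_primitive_part[OF assms(2-4), folded g_def]
  define K' where "K' = K div g^2"
  have "K' \<noteq> 0" using assms(1) prim(5) by (simp add: K'_def dvd_div_eq_0_iff)
  have "coprime (m div g) K'"
    using coprime_pell_m_rhs[OF prim(7,6)] by (simp add: K'_def)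
  let ?P = "\<lambda>r. 0 \<le> r \<and> r < \<bar>K'\<bar> \<and> K' dvd u div g - r * (m div g)"
  obtain r0 where "?P r0"
    using pell_root_exists[OF \<open>coprime (m div g) K'\<close> \<open>K' \<noteq> 0\<close>] by blast
  then have "?P (SOME r. ?P r)" by (rule someI)
  moreover have "r = (SOME r. ?P r)" by (simp add: r_def pell_class_def Let_def g_def K'_def)
  ultimately have r: "?P r" by simp
  then show "K div g^2 dvd u div g - r * (m div g)" by (simp add: K'_def)
  show "fst (pell_class K u m) = g" by (simp add: pell_class_def Let_def g_def)
  have "\<bar>K'\<bar> = \<bar>K\<bar> div g^2"
    using prim(5) by (simp add: K'_def abs_div)
  then show "r \<in> sqrts_mod D (\<bar>K\<bar> div g^2)"
    using pell_root_in_sqrts_mod[OF prim(6) \<open>coprime (m div g) K'\<close>[unfolded K'_def]] r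
    by (simp add: K'_def)
qed

lemma pell_class_inj_on_window:
  fixes D K :: int and L \<rho> :: real
  assumes "0 \<le> \<rho>" "\<rho>^2 < D" "K \<noteq> 0" "W \<subseteq> pell_ms D K"
    and window: "\<And>m. m \<in> W \<Longrightarrow> L \<le> m \<and> m < \<rho> * L"
  shows "inj_on (\<lambda>m. pell_class K (pell_u D K m) m) W"
proof (rule inj_onI)
  fix m1 m2 assume m: "m1 \<in> W" "m2 \<in> W"
    and same: "pell_class K (pell_u D K m1) m1 = pell_class K (pell_u D K m2) m2"
  define u1 u2 where "u1 = pell_u D K m1" and "u2 = pell_u D K m2"
  have sol: "1 \<le> m1" "0 \<le> u1" "u1^2 - D * m1^2 = K" "1 \<le> m2" "0 \<le> u2" "u2^2 - D * m2^2 = K"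
    using pell_u_spec[of m1 D K] pell_u_spec[of m2 D K] m assms(4) by (auto simp: u1_def u2_def)
  define g where "g = gcd u1 m1"
  define r where "r = snd (pell_class K u1 m1)"
  define K' where "K' = K div g^2"
  note c1 = pell_class_spec[OF assms(3) sol(1-3)] and c2 = pell_class_spec[OF assms(3) sol(4-6)]
  note p1 = pell_primitive_part[OF sol(1-3)] and p2 = pell_primitive_part[OF sol(4-6)]
  have "gcd u2 m2 = g" "snd (pell_class K u2 m2) = r"
    using same c1(1) c2(1) by (simp_all add: g_def r_def u1_def u2_def flip: u1_def u2_def)
  note p1 = p1[folded g_def] and p2 = p2[unfolded \<open>gcd u2 m2 = g\<close>]
  have d1: "K' dvd u1 div g - r * (m1 div g)" and d2: "K' dvd u2 div g - r * (m2 div g)"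
    using c1(3) c2(3) by (simp_all add: g_def r_def K'_def \<open>gcd u2 m2 = g\<close> \<open>snd (pell_class K u2 m2) = r\<close>)
  have "K' dvd (u1 div g - r * (m1 div g)) * (m2 div g) - (u2 div g - r * (m2 div g)) * (m1 div g)"
    using dvd_mult2[OF d1, of "m2 div g"] dvd_mult2[OF d2, of "m1 div g"] by (rule dvd_diff)
  then have "K' dvd (u1 div g) * (m2 div g) - (u2 div g) * (m1 div g)"
    by (simp add: algebra_simps)
  moreover have "K' \<noteq> 0" using assms(3) p1(5) by (simp add: K'_def dvd_div_eq_0_iff)
  moreover have "L / g \<le> m div g \<and> m div g < \<rho> * (L / g)" if "m \<in> {m1, m2}" for m
  proof -
    have "real_of_int m = g * real_of_int (m div g)" "real_of_int g > 0"
      using that p1(1,2) p2(2) by (auto simp flip: of_int_mult)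
    then show ?thesis using window[of m] that m by (auto simp: field_simps)
  qed
  ultimately have "m1 div g = m2 div g"
    using pell_window_unique[OF assms(1,2) _ p1(3,4,6) p2(3,4,6), of "L / g"] by (simp add: K'_def)
  then show "m1 = m2" using p1(2) p2(2) by metis
qed

lemma pell_class_mem:
  fixes D K m :: int
  assumes "K \<noteq> 0" "m \<in> pell_ms D K"
  shows "pell_class K (pell_u D K m) m \<in> (SIGMA g:{g. 0 < g \<and> g^2 dvd \<bar>K\<bar>}. sqrts_mod D (\<bar>K\<bar> div g^2))"
proof -
  note sol = pell_u_spec[OF assms(2)]
  note c = pell_class_spec[OF assms(1) sol] and p = pell_primitive_part[OF sol]
  let ?g = "gcd (pell_u D K m) m"
  have "pell_class K (pell_u D K m) m = (?g, snd (pell_class K (pell_u D K m) m))"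
    using c(1) by (metis prod.collapse)
  moreover have "?g \<in> {g. 0 < g \<and> g^2 dvd \<bar>K\<bar>}" using p(1,5) by simp
  ultimately show ?thesis using c(2) by (metis SigmaI)
qed

lemma square_divisors_subset: "{g. 0 < g \<and> g^2 dvd n} \<subseteq> {d. d > 0 \<and> d dvd (n :: int)}"
  by (auto simp: power2_eq_square intro: dvd_mult_left)

lemma finite_pell_classes:
  fixes D n :: int
  assumes "n > 0"
  shows "finite (SIGMA g:{g. 0 < g \<and> g^2 dvd n}. sqrts_mod D (n div g^2))"
  using finite_subset[OF square_divisors_subset finite_pos_divisors_int[OF assms]] by simp

lemma card_pell_classes_le:
  fixes D n :: int
  assumes "D > 0" "n > 0"
  shows "real (card (SIGMA g:{g. 0 < g \<and> g^2 dvd n}. sqrts_mod D (n div g^2)))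
           \<le> 2 * sqrt (real_of_int D) * real (divisor_count (nat n))^2"
proof -
  define G where "G = {g. 0 < g \<and> g^2 dvd n}"
  have "finite G" "card G \<le> divisor_count (nat n)"
    using square_divisors_subset finite_pos_divisors_int[OF assms(2)] card_pos_divisors_int[OF assms(2)]
    unfolding G_def by (metis finite_subset card_mono)+
  have bound: "real (card (sqrts_mod D (n div g^2))) \<le> 2 * sqrt (real_of_int D) * real (divisor_count (nat n))"
    if g: "g \<in> G" for g
  proof -
    obtain k where k: "n = g^2 * k" using g by (auto simp: G_def elim: dvdE)
    then have "n div g^2 = k" "k > 0" using g assms(2) by (auto simp: G_def zero_less_mult_iff)
    then have "divisor_count (nat (n div g^2)) \<le> divisor_count (nat n)"
      using k assms(2) by (intro divisor_count_mono) (auto simp: nat_mult_distrib)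
    have "real (card (sqrts_mod D (n div g^2)))
            \<le> 2 * sqrt (real_of_int D) * real (divisor_count (nat (n div g^2)))"
      using card_sqrts_mod_le[OF assms(1)] \<open>k > 0\<close> \<open>n div g^2 = k\<close> by simp
    also have "\<dots> \<le> 2 * sqrt (real_of_int D) * real (divisor_count (nat n))"
      using \<open>divisor_count (nat (n div g^2)) \<le> divisor_count (nat n)\<close> assms(1) by (intro mult_left_mono) auto
    finally show ?thesis .
  qed
  have "real (card (SIGMA g:G. sqrts_mod D (n div g^2))) = (\<Sum>g\<in>G. real (card (sqrts_mod D (n div g^2))))"
    using \<open>finite G\<close> by (simp add: card_SigmaI)
  also have "\<dots> \<le> real (card G) * (2 * sqrt (real_of_int D) * real (divisor_count (nat n)))"
    using bound by (rule sum_bounded_above)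
  also have "\<dots> \<le> real (divisor_count (nat n)) * (2 * sqrt (real_of_int D) * real (divisor_count (nat n)))"
    using \<open>card G \<le> divisor_count (nat n)\<close> assms(1) by (intro mult_right_mono) auto
  finally show ?thesis by (simp add: G_def power2_eq_square algebra_simps)
qed

lemma card_pell_window_le:
  fixes D K :: int and L \<rho> :: real
  assumes "0 \<le> \<rho>" "\<rho>^2 < D" "K \<noteq> 0" "W \<subseteq> pell_ms D K"
    and "\<And>m. m \<in> W \<Longrightarrow> L \<le> m \<and> m < \<rho> * L"
  shows "real (card W) \<le> 2 * sqrt (real_of_int D) * real (divisor_count (nat \<bar>K\<bar>))^2"
proof -
  let ?T = "SIGMA g:{g. 0 < g \<and> g^2 dvd \<bar>K\<bar>}. sqrts_mod D (\<bar>K\<bar> div g^2)"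
  have "D > 0" using assms(2) zero_le_power2[of \<rho>] by linarith
  have "finite ?T" using finite_pell_classes[of "\<bar>K\<bar>" D] assms(3) by simp
  moreover have "(\<lambda>m. pell_class K (pell_u D K m) m) ` W \<subseteq> ?T"
    using pell_class_mem[OF assms(3)] assms(4) by blast
  ultimately have "card W \<le> card ?T"
    using card_inj_on_le[OF pell_class_inj_on_window[OF assms]] by blast
  then have "real (card W) \<le> real (card ?T)" by simp
  also have "\<dots> \<le> 2 * sqrt (real_of_int D) * real (divisor_count (nat \<bar>K\<bar>))^2"
    using card_pell_classes_le[OF \<open>D > 0\<close>, of "\<bar>K\<bar>"] assms(3) by fastforce
  finally show ?thesis .
qed

section \<open>Summation over windows\<close>

lemma pell_m_lower_bound_of_neg:
  fixes D K m :: int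
  assumes "D > 0" "K < 0" "m \<in> pell_ms D K"
  shows "sqrt \<bar>real_of_int K\<bar> / D \<le> real_of_int m ^ 2"
proof -
  obtain u where "u^2 - D * m^2 = K" using assms(3) by (auto simp: pell_ms_def)
  then have "\<bar>K\<bar> \<le> D * m^2" using assms(2) by (smt (verit) zero_le_power2)
  then have "\<bar>real_of_int K\<bar> \<le> real_of_int D * real_of_int m ^ 2"
    by (metis of_int_abs of_int_le_iff of_int_mult of_int_power)
  moreover have "sqrt \<bar>real_of_int K\<bar> \<le> \<bar>real_of_int K\<bar>"
  proof -
    have "1 \<le> sqrt \<bar>real_of_int K\<bar>" using assms(2) by simp
    then have "sqrt \<bar>real_of_int K\<bar> * 1 \<le> sqrt \<bar>real_of_int K\<bar> * sqrt \<bar>real_of_int K\<bar>"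
      by (intro mult_left_mono) auto
    then show ?thesis by simp
  qed
  ultimately show ?thesis using assms(1) by (simp add: divide_le_eq mult.commute)
qed

lemma sqrt_le_of_pell_eq:
  fixes D K u m :: int
  assumes "D > 0" "0 \<le> u" "u^2 - D * m^2 = K"
  shows "sqrt (real_of_int K) \<le> real_of_int u"
proof -
  have "K \<le> u^2" using assms by (smt (verit) mult_nonneg_nonneg zero_le_power2)
  then have "real_of_int K \<le> real_of_int u ^ 2" by (metis of_int_le_iff of_int_power)
  then show ?thesis using assms(2) real_sqrt_le_mono[of "real_of_int K" "real_of_int u ^ 2"] by simp
qed

lemma pell_m_square_gap:
  fixes D K a b :: int
  assumes "D > 0" "a \<in> pell_ms D K" "b \<in> pell_ms D K" "a < b"
  shows "2 * sqrt (real_of_int K) \<le> real_of_int D * (real_of_int b ^ 2 - real_of_int a ^ 2)"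
proof -
  obtain ua ub where ua: "0 \<le> ua" "ua^2 - D * a^2 = K" and ub: "0 \<le> ub" "ub^2 - D * b^2 = K"
    using assms(2,3) by (auto simp: pell_ms_def)
  have "1 \<le> a" using assms(2) by (simp add: pell_ms_def)
  then have "a^2 < b^2" using assms(4) by (intro power_strict_mono) auto
  then have "ua^2 < ub^2" using ua ub assms(1) by (smt (verit) mult_strict_left_mono)
  then have "ua < ub" using ub(1) by (rule power_less_imp_less_base)
  then have "1 * (ub + ua) \<le> (ub - ua) * (ub + ua)" using ua(1) ub(1) by (intro mult_right_mono) auto
  then have "ub + ua \<le> (ub - ua) * (ub + ua)" by simp
  also have "\<dots> = D * (b^2 - a^2)" using ua(2) ub(2) by (simp add: power2_eq_square algebra_simps)
  finally have "real_of_int ub + real_of_int ua \<le> real_of_int D * (real_of_int b ^ 2 - real_of_int a ^ 2)"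
    by (metis of_int_add of_int_diff of_int_le_iff of_int_mult of_int_power)
  then show ?thesis
    using sqrt_le_of_pell_eq[OF assms(1) ua] sqrt_le_of_pell_eq[OF assms(1) ub] by linarith
qed

lemma pell_small_m_unique:
  fixes D K m1 m2 :: int
  assumes "D > 0" "K \<noteq> 0" "m1 \<in> pell_ms D K" "m2 \<in> pell_ms D K"
    and "real_of_int m1 ^ 2 < sqrt \<bar>real_of_int K\<bar> / D" "real_of_int m2 ^ 2 < sqrt \<bar>real_of_int K\<bar> / D"
  shows "m1 = m2"
proof (cases "K < 0")
  case True
  then show ?thesis using pell_m_lower_bound_of_neg[OF assms(1) True assms(3)] assms(5) by linarith
next
  case False
  have "sqrt \<bar>real_of_int K\<bar> / D \<le> real_of_int b ^ 2"
    if "a \<in> pell_ms D K" "b \<in> pell_ms D K" "a < b" for a b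
  proof -
    have "sqrt \<bar>real_of_int K\<bar> \<le> 2 * sqrt (real_of_int K)" using False by simp
    also have "\<dots> \<le> real_of_int D * real_of_int b ^ 2"
      using pell_m_square_gap[OF assms(1) that] assms(1) by (smt (verit) mult_left_mono of_int_pos zero_le_power2)
    finally show ?thesis using assms(1) by (simp add: divide_le_eq mult.commute)
  qed
  then show ?thesis using assms(3-6) by (metis linorder_neqE not_less)
qed

definition window_index :: "real \<Rightarrow> int \<Rightarrow> nat" where
  "window_index \<rho> m = nat \<lfloor>log \<rho> (real_of_int m)\<rfloor>"

lemma window_index_bounds:
  assumes "1 < \<rho>" "1 \<le> m"
  shows "\<rho> ^ window_index \<rho> m \<le> real_of_int m" "real_of_int m < \<rho> ^ (window_index \<rho> m + 1)"
proof -
  define l where "l = log \<rho> (real_of_int m)"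
  have "l \<ge> 0" "real_of_int m = \<rho> powr l" using assms by (simp_all add: l_def)
  have j: "real (window_index \<rho> m) = of_int \<lfloor>l\<rfloor>"
    using \<open>l \<ge> 0\<close> by (simp add: window_index_def l_def)
  have "\<rho> ^ window_index \<rho> m = \<rho> powr (window_index \<rho> m)"
    using assms(1) by (simp add: powr_realpow)
  also have "\<dots> \<le> \<rho> powr l" using assms(1) j by (intro powr_mono) auto
  finally show "\<rho> ^ window_index \<rho> m \<le> real_of_int m" using \<open>real_of_int m = \<rho> powr l\<close> by simp
  have "\<rho> powr l < \<rho> powr (window_index \<rho> m + 1)"
    using assms(1) j by (intro powr_less_mono) linarith+
  also have "\<dots> = \<rho> ^ (window_index \<rho> m + 1)" by (rule powr_realpow) (use assms(1) in simp)
  finally show "real_of_int m < \<rho> ^ (window_index \<rho> m + 1)" using \<open>real_of_int m = \<rho> powr l\<close> by simp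
qed

lemma square_less_window_index_bound:
  assumes "1 < \<rho>" "1 \<le> m"
  shows "real_of_int m ^ 2 < \<rho> ^ (2 * window_index \<rho> m + 2)"
proof -
  have "real_of_int m ^ 2 < (\<rho> ^ (window_index \<rho> m + 1)) ^ 2"
    using window_index_bounds[OF assms] assms(2) by (intro power_strict_mono) auto
  also have "\<dots> = \<rho> ^ ((window_index \<rho> m + 1) * 2)" by (simp only: power_mult)
  also have "(window_index \<rho> m + 1) * 2 = 2 * window_index \<rho> m + 2" by simp
  finally show ?thesis .
qed

lemma inverse_powr_le_window_index:
  assumes "1 < \<rho>" "0 < lam" "1 \<le> m"
  shows "1 / real_of_int m powr lam \<le> (\<rho> powr - lam) ^ window_index \<rho> m"
proof -
  have "\<rho> powr (window_index \<rho> m * lam) = (\<rho> ^ window_index \<rho> m) powr lam"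
    using assms(1) by (simp add: powr_powr flip: powr_realpow)
  also have "\<dots> \<le> real_of_int m powr lam"
    using window_index_bounds(1)[OF assms(1,3)] assms by (intro powr_mono2) auto
  finally have "1 / real_of_int m powr lam \<le> 1 / \<rho> powr (window_index \<rho> m * lam)"
    using assms(1,3) by (intro divide_left_mono mult_pos_pos) auto
  also have "\<dots> = \<rho> powr (window_index \<rho> m * - lam)" by (simp add: powr_minus divide_inverse)
  also have "\<dots> = (\<rho> powr - lam) ^ window_index \<rho> m"
    by (rule powr_power[symmetric]) (use assms(1) in simp)
  finally show ?thesis .
qed

lemma card_pell_window_index_le:
  fixes D K :: int and \<rho> s :: real and F :: "int set"
  assumes "1 < \<rho>" "\<rho>^2 < D" "K \<noteq> 0" "0 \<le> s" "finite F" "F \<subseteq> pell_ms D K"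
  defines "R \<equiv> 2 * sqrt (real_of_int D) * real (divisor_count (nat \<bar>K\<bar>))^2"
    and "H \<equiv> sqrt \<bar>real_of_int K\<bar> / D"
  shows "real (card {m \<in> F. window_index \<rho> m = j}) \<le> 1 + R * (\<rho>^(2*j+2) / H) powr s"
proof -
  define Fj where "Fj = {m \<in> F. window_index \<rho> m = j}"
  have "D > 0" using assms(2) zero_le_power2[of \<rho>] by linarith
  have "H > 0" using \<open>D > 0\<close> assms(3) by (simp add: H_def)
  have "R \<ge> 0" using \<open>D > 0\<close> by (simp add: R_def)
  have window: "\<rho>^j \<le> real_of_int m \<and> real_of_int m < \<rho> * \<rho>^j" if "m \<in> Fj" for m
    using window_index_bounds[OF assms(1), of m] that assms(6) by (auto simp: Fj_def pell_ms_def)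
  show ?thesis
  proof (cases "\<rho>^(2*j+2) \<le> H")
    case True
    have small: "real_of_int m ^ 2 < H" if "m \<in> Fj" for m
      using square_less_window_index_bound[OF assms(1), of m] that assms(6) True
      by (auto simp: Fj_def pell_ms_def)
    have "m1 = m2" if "m1 \<in> Fj" "m2 \<in> Fj" for m1 m2
      using pell_small_m_unique[OF \<open>D > 0\<close> assms(3)] small[OF that(1)] small[OF that(2)]
        that assms(6) by (auto simp: Fj_def H_def)
    then have "card Fj \<le> 1"
      using assms(5) by (auto simp: card_le_Suc0_iff_eq Fj_def)
    moreover have "0 \<le> R * (\<rho>^(2*j+2) / H) powr s" using \<open>R \<ge> 0\<close> by simp
    ultimately show ?thesis by (simp add: Fj_def)
  next
    case False
    have "real (card Fj) \<le> R"
      unfolding R_def using assms(1-3,6) window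
      by (intro card_pell_window_le[of \<rho> D K _ "\<rho>^j"]) (auto simp: Fj_def)
    moreover have "1 \<le> (\<rho>^(2*j+2) / H) powr s"
      using False \<open>H > 0\<close> assms(4) by (intro ge_one_powr_ge_zero) (auto simp: le_divide_eq)
    then have "R \<le> R * (\<rho>^(2*j+2) / H) powr s"
      using \<open>R \<ge> 0\<close> mult_left_mono[of 1 _ R] by simp
    ultimately show ?thesis by (simp add: Fj_def)
  qed
qed

lemma sum_geometric_le:
  fixes q :: real
  assumes "0 \<le> q" "q < 1"
  shows "(\<Sum>j<N. q^j) \<le> 1 / (1 - q)"
  using sum_le_suminf[OF summable_geometric, of q "{..<N}"] suminf_geometric[of q] assms by simp

lemma window_weight_eq:
  fixes \<rho> H lam :: real
  assumes "\<rho> > 0" "H > 0"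
  shows "(\<rho>^(2*j+2) / H) powr (lam/4) * (\<rho> powr -lam)^j
           = \<rho> powr (lam/2) * H powr (-lam/4) * (\<rho> powr (-lam/2))^j"
proof -
  have "H powr (-lam/4) = 1 / H powr (lam/4)" by (simp add: powr_minus_divide[symmetric])
  have "\<rho>^(2*j+2) = \<rho> powr real (2*j+2)" by (rule powr_realpow[symmetric]) (use assms in simp)
  then have "(\<rho>^(2*j+2) / H) powr (lam/4) = (\<rho> powr real (2*j+2)) powr (lam/4) / H powr (lam/4)"
    by (simp only: powr_divide)
  also have "\<dots> = \<rho> powr (real (2*j+2) * (lam/4)) * H powr (-lam/4)"
    unfolding powr_powr \<open>H powr (-lam/4) = 1 / H powr (lam/4)\<close> by simp
  finally have base: "(\<rho>^(2*j+2) / H) powr (lam/4) = \<rho> powr (real (2*j+2) * (lam/4)) * H powr (-lam/4)" .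
  have pow: "(\<rho> powr c)^j = \<rho> powr (real j * c)" for c
    by (rule powr_power) (use assms(1) in simp)
  have "(\<rho>^(2*j+2) / H) powr (lam/4) * (\<rho> powr -lam)^j
          = H powr (-lam/4) * \<rho> powr (real (2*j+2) * (lam/4) + real j * - lam)"
    unfolding base pow powr_add by (simp only: ac_simps)
  also have "real (2*j+2) * (lam/4) + real j * - lam = lam/2 + real j * (-lam/2)"
    by (simp add: algebra_simps)
  also have "H powr (-lam/4) * \<rho> powr (lam/2 + real j * (-lam/2))
               = \<rho> powr (lam/2) * H powr (-lam/4) * (\<rho> powr (-lam/2))^j"
    unfolding pow powr_add by (simp only: ac_simps)
  finally show ?thesis .
qed

lemma sum_inverse_powr_pell_ms_le:
  fixes D K :: int and \<rho> lam :: real and F :: "int set"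
  assumes "1 < \<rho>" "\<rho>^2 < D" "K \<noteq> 0" "0 < lam" "finite F" "F \<subseteq> pell_ms D K"
  defines "R \<equiv> 2 * sqrt (real_of_int D) * real (divisor_count (nat \<bar>K\<bar>))^2"
    and "H \<equiv> sqrt \<bar>real_of_int K\<bar> / D"
  shows "(\<Sum>m\<in>F. 1 / real_of_int m powr lam)
           \<le> 1 / (1 - \<rho> powr -lam) + \<rho> powr (lam/2) / (1 - \<rho> powr (-lam/2)) * R * H powr (-lam/4)"
proof -
  define q1 q2 where "q1 = \<rho> powr -lam" and "q2 = \<rho> powr (-lam/2)"
  have q: "0 \<le> q1" "q1 < 1" "0 \<le> q2" "q2 < 1"
    using assms(1,4) by (auto simp: q1_def q2_def powr_less_one)
  have "D > 0" using assms(2) zero_le_power2[of \<rho>] by linarith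
  then have "H > 0" "R \<ge> 0" using assms(3) by (simp_all add: H_def R_def)
  obtain N where N: "window_index \<rho> ` F \<subseteq> {..<N}"
    using finite_nat_bounded[OF finite_imageI[OF assms(5)]] by auto
  define Fj where "Fj j = {m \<in> F. window_index \<rho> m = j}" for j
  have term_le: "1 / real_of_int m powr lam \<le> q1 ^ j" if "m \<in> Fj j" for m j
    using inverse_powr_le_window_index[OF assms(1,4)] that assms(6)
    by (auto simp: Fj_def q1_def pell_ms_def)
  have "(\<Sum>m\<in>F. 1 / real_of_int m powr lam) = (\<Sum>j<N. \<Sum>m\<in>Fj j. 1 / real_of_int m powr lam)"
    using sum.group[OF assms(5) _ N, of "\<lambda>m. 1 / real_of_int m powr lam"] by (simp add: Fj_def)
  also have "\<dots> \<le> (\<Sum>j<N. real (card (Fj j)) * q1 ^ j)"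
    using term_le by (intro sum_mono sum_bounded_above) auto
  also have "\<dots> \<le> (\<Sum>j<N. (1 + R * (\<rho>^(2*j+2) / H) powr (lam/4)) * q1 ^ j)"
    using card_pell_window_index_le[OF assms(1-3) _ assms(5,6), where s = "lam/4"] assms(4) q
    by (intro sum_mono mult_right_mono) (auto simp: Fj_def R_def H_def)
  also have "\<dots> = (\<Sum>j<N. q1 ^ j) + \<rho> powr (lam/2) * R * H powr (-lam/4) * (\<Sum>j<N. q2 ^ j)"
    using window_weight_eq[where \<rho> = \<rho> and H = H and lam = lam] assms(1) \<open>H > 0\<close>
    by (simp add: q1_def q2_def algebra_simps sum.distrib sum_distrib_left)
  also have "\<dots> \<le> 1 / (1 - q1) + \<rho> powr (lam/2) * R * H powr (-lam/4) * (1 / (1 - q2))"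
    using sum_geometric_le q \<open>R \<ge> 0\<close> by (intro add_mono mult_left_mono) auto
  finally show ?thesis by (simp add: q1_def q2_def)
qed

lemma divisor_weight_le:
  fixes D n d lam Cd :: real
  assumes "0 < lam" "1 \<le> D" "1 \<le> n" "0 \<le> d" "d \<le> Cd * n powr (lam/16)"
  shows "2 * sqrt D * d^2 * (sqrt n / D) powr (-lam/4) \<le> 2 * Cd^2 * D powr ((1 + lam)/2)"
proof -
  have weight: "(sqrt n / D) powr (-lam/4) = n powr (-lam/8) * D powr (lam/4)"
  proof -
    have "D powr (-lam/4) = 1 / D powr (lam/4)" by (simp add: powr_minus_divide[symmetric])
    have "(sqrt n / D) powr (-lam/4) = (n powr (1/2)) powr (-lam/4) / D powr (-lam/4)"
      using assms(3) by (simp only: powr_divide powr_half_sqrt)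
    also have "\<dots> = n powr (-lam/8) * D powr (lam/4)"
      unfolding powr_powr \<open>D powr (-lam/4) = 1 / D powr (lam/4)\<close> by simp
    finally show ?thesis .
  qed
  have divisors: "d^2 * n powr (-lam/8) \<le> Cd^2"
  proof -
    have "d^2 \<le> (Cd * n powr (lam/16))^2" using power_mono[OF assms(5,4)] .
    also have "\<dots> = Cd^2 * (n powr (lam/16))^2" by (simp only: power_mult_distrib)
    also have "(n powr (lam/16))^2 = n powr (lam/8)"
      using assms(3) by (simp add: powr_power)
    finally have "d^2 * n powr (-lam/8) \<le> Cd^2 * n powr (lam/8) * n powr (-lam/8)"
      by (rule mult_right_mono) simp
    also have "\<dots> = Cd^2" using assms(3) by (simp add: mult.assoc flip: powr_add)
    finally show ?thesis .
  qed
  have discr: "sqrt D * D powr (lam/4) \<le> D powr ((1 + lam)/2)"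
  proof -
    have "sqrt D * D powr (lam/4) = D powr (1/2 + lam/4)"
      using assms(2) by (simp add: powr_add powr_half_sqrt)
    also have "\<dots> \<le> D powr ((1 + lam)/2)"
      using assms(1,2) by (intro powr_mono) auto
    finally show ?thesis .
  qed
  have "2 * sqrt D * d^2 * (sqrt n / D) powr (-lam/4) = 2 * ((d^2 * n powr (-lam/8)) * (sqrt D * D powr (lam/4)))"
    unfolding weight by (simp only: ac_simps)
  also have "\<dots> \<le> 2 * (Cd^2 * D powr ((1 + lam)/2))"
    using divisors discr assms(2) by (intro mult_left_mono mult_mono) auto
  finally show ?thesis by (simp only: ac_simps)
qed

lemma sum_inverse_powr_pell_ms_le_discriminant:
  fixes lam :: real
  assumes "0 < lam"
  obtains C where "0 \<le> C" and "\<And>D K F. 2 \<le> D \<Longrightarrow> K \<noteq> 0 \<Longrightarrow> finite F \<Longrightarrow> F \<subseteq> pell_ms D K \<Longrightarrow>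
    (\<Sum>m\<in>F. 1 / real_of_int m powr lam) \<le> C * real_of_int D powr ((1 + lam)/2)"
proof -
  obtain Cd where Cd: "\<And>n. n > 0 \<Longrightarrow> real (divisor_count n) \<le> Cd * real n powr (lam/16)"
    using divisor_count_le_powr[of "lam/16"] assms by auto
  \<comment> \<open>any fixed \<rho> with 1 < \<rho> < sqrt 2 would do\<close>
  define \<rho> :: real where "\<rho> = 6/5"
  define A where "A = 1 / (1 - \<rho> powr -lam)"
  define B where "B = \<rho> powr (lam/2) / (1 - \<rho> powr (-lam/2))"
  have "A \<ge> 0" "B \<ge> 0" using assms by (simp_all add: A_def B_def \<rho>_def powr_less_one less_imp_le)
  show thesis
  proof (rule that)
    show "0 \<le> A + 2 * B * Cd^2" using \<open>A \<ge> 0\<close> \<open>B \<ge> 0\<close> by simp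
  next
    fix D K :: int and F :: "int set"
    assume D: "2 \<le> D" and K: "K \<noteq> 0" and F: "finite F" "F \<subseteq> pell_ms D K"
    define E where "E = real_of_int D powr ((1 + lam)/2)"
    have "E \<ge> 1" using D assms by (simp add: E_def ge_one_powr_ge_zero)
    have "\<rho>^2 < D" "1 < \<rho>" using D by (simp_all add: \<rho>_def power2_eq_square)
    have "(\<Sum>m\<in>F. 1 / real_of_int m powr lam)
            \<le> A + B * (2 * sqrt (real_of_int D) * real (divisor_count (nat \<bar>K\<bar>))^2
                 * (sqrt \<bar>real_of_int K\<bar> / D) powr (-lam/4))"
      using sum_inverse_powr_pell_ms_le[OF \<open>1 < \<rho>\<close> \<open>\<rho>^2 < D\<close> K assms F]
      by (simp add: A_def B_def mult.assoc)
    also have "\<dots> \<le> A * E + B * (2 * Cd^2 * E)"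
      using divisor_weight_le[OF assms, of D "\<bar>real_of_int K\<bar>" "real (divisor_count (nat \<bar>K\<bar>))" Cd]
        Cd[of "nat \<bar>K\<bar>"] D K \<open>E \<ge> 1\<close> \<open>A \<ge> 0\<close> \<open>B \<ge> 0\<close>
      by (intro add_mono mult_left_mono) (auto simp: E_def mult_le_cancel_left1)
    also have "\<dots> = (A + 2 * B * Cd^2) * real_of_int D powr ((1 + lam)/2)"
      by (simp add: E_def algebra_simps)
    finally show "(\<Sum>m\<in>F. 1 / real_of_int m powr lam) \<le> (A + 2 * B * Cd^2) * real_of_int D powr ((1 + lam)/2)" .
  qed
qed

section \<open>Binary quadratic forms\<close>

lemma square_if_mult_square_eq:
  fixes D m u :: int
  assumes "D * m^2 = u^2" "m \<noteq> 0"
  shows "\<exists>r. D = r^2"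
proof -
  have "is_square (D * m^2)" using assms(1) by simp
  then have "is_square D" using assms(2) by (simp add: is_nth_power_mult_cancel_right)
  then show ?thesis by (auto elim: is_nth_powerE)
qed

lemma form_discriminant_identity:
  fixes a b c m n :: "'a :: comm_ring_1"
  shows "(2*c*n + b*m)^2 - (b^2 - 4*a*c) * m^2 = 4*c * (a*m^2 + b*m*n + c*n^2)"
  by (simp add: power2_eq_square algebra_simps)

lemma form_no_nontrivial_zero:
  fixes a b c m n :: int
  assumes "\<not> (\<exists>r. b^2 - 4*a*c = r^2)" "m \<noteq> 0"
  shows "a*m^2 + b*m*n + c*n^2 \<noteq> 0"
proof
  assume "a*m^2 + b*m*n + c*n^2 = 0"
  then have "(b^2 - 4*a*c) * m^2 = (2*c*n + b*m)^2"
    using form_discriminant_identity[of c n b m a] by simp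
  then show False using square_if_mult_square_eq assms by blast
qed

lemma abs_in_pell_ms_if_form_eq:
  fixes a b c k m n :: int
  assumes "m \<noteq> 0" "a*m^2 + b*m*n + c*n^2 = k"
  shows "\<bar>m\<bar> \<in> pell_ms (b^2 - 4*a*c) (4*c*k)"
  using form_discriminant_identity[of c n b m a] assms
  by (auto simp: pell_ms_def intro!: exI[of _ "\<bar>2*c*n + b*m\<bar>"])

lemma abs_fst_image_subset_pell_ms:
  fixes a b c k :: int and F :: "(int \<times> int) set"
  assumes "F \<subseteq> {(m, n). m \<noteq> 0 \<and> a*m^2 + b*m*n + c*n^2 = k}"
  shows "(\<lambda>x. \<bar>fst x\<bar>) ` F \<subseteq> pell_ms (b^2 - 4*a*c) (4*c*k)"
proof
  fix M assume "M \<in> (\<lambda>x. \<bar>fst x\<bar>) ` F"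
  then obtain m n where "(m, n) \<in> F" "M = \<bar>m\<bar>" by auto
  then show "M \<in> pell_ms (b^2 - 4*a*c) (4*c*k)"
    using assms abs_in_pell_ms_if_form_eq[of m a b n c k] by auto
qed

lemma card_form_solutions_with_abs_le:
  fixes a b c k M :: int and F :: "(int \<times> int) set"
  assumes "c \<noteq> 0" "F \<subseteq> {(m, n). a*m^2 + b*m*n + c*n^2 = k}" "M \<in> pell_ms (b^2 - 4*a*c) (4*c*k)"
  shows "card {x \<in> F. \<bar>fst x\<bar> = M} \<le> 4"
proof -
  define w where "w = pell_u (b^2 - 4*a*c) (4*c*k) M"
  have w: "w^2 = (b^2 - 4*a*c) * M^2 + 4*c*k" using pell_u_spec[OF assms(3)] by (simp add: w_def)
  let ?phi = "\<lambda>(m, n). (m, 2*c*n + b*m)"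
  have "inj_on ?phi {x \<in> F. \<bar>fst x\<bar> = M}"
    using assms(1) by (auto intro!: inj_onI)
  moreover have "?phi x \<in> {M, -M} \<times> {w, -w}" if "x \<in> F" "\<bar>fst x\<bar> = M" for x
  proof -
    obtain m n where x: "x = (m, n)" by fastforce
    have "m^2 = M^2" using that(2) x by auto
    then have "(2*c*n + b*m)^2 = w^2"
      using assms(2) that(1) x w form_discriminant_identity[of c n b m a] by auto
    then show ?thesis using that(2) x by (auto simp: power2_eq_iff)
  qed
  then have "?phi ` {x \<in> F. \<bar>fst x\<bar> = M} \<subseteq> {M, -M} \<times> {w, -w}" by blast
  ultimately have "card {x \<in> F. \<bar>fst x\<bar> = M} \<le> card ({M, -M} \<times> {w, -w})"
    by (intro card_inj_on_le) auto
  also have "\<dots> \<le> 4" by (simp add: card_cartesian_product card_insert_if)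
  finally show ?thesis .
qed

lemma sum_form_solutions_le:
  fixes a b c k :: int and F :: "(int \<times> int) set" and lam :: real
  assumes "c \<noteq> 0" "finite F" "F \<subseteq> {(m, n). m \<noteq> 0 \<and> a*m^2 + b*m*n + c*n^2 = k}"
  shows "(\<Sum>(m, n)\<in>F. 1 / \<bar>real_of_int m\<bar> powr lam)
           \<le> 4 * (\<Sum>M\<in>(\<lambda>x. \<bar>fst x\<bar>) ` F. 1 / real_of_int M powr lam)"
proof -
  let ?f = "\<lambda>(m, n). 1 / \<bar>real_of_int m\<bar> powr lam"
  have "(\<Sum>x\<in>F. ?f x) = (\<Sum>M\<in>(\<lambda>x. \<bar>fst x\<bar>) ` F. \<Sum>x\<in>{x \<in> F. \<bar>fst x\<bar> = M}. ?f x)"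
    using sum.group[OF assms(2) finite_imageI[OF assms(2)] subset_refl, of ?f "\<lambda>x. \<bar>fst x\<bar>"] by simp
  also have "\<dots> \<le> (\<Sum>M\<in>(\<lambda>x. \<bar>fst x\<bar>) ` F. 4 * (1 / real_of_int M powr lam))"
  proof (rule sum_mono)
    fix M assume "M \<in> (\<lambda>x. \<bar>fst x\<bar>) ` F"
    then have "M \<in> pell_ms (b^2 - 4*a*c) (4*c*k)"
      using abs_fst_image_subset_pell_ms[OF assms(3)] by blast
    moreover have "F \<subseteq> {(m, n). a*m^2 + b*m*n + c*n^2 = k}" using assms(3) by auto
    ultimately have card: "card {x \<in> F. \<bar>fst x\<bar> = M} \<le> 4"
      using card_form_solutions_with_abs_le[OF assms(1)] by blast
    have "(\<Sum>x\<in>{x \<in> F. \<bar>fst x\<bar> = M}. ?f x) = (\<Sum>x\<in>{x \<in> F. \<bar>fst x\<bar> = M}. 1 / real_of_int M powr lam)"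
      by (rule sum.cong) (auto split: prod.splits)
    also have "\<dots> = real (card {x \<in> F. \<bar>fst x\<bar> = M}) * (1 / real_of_int M powr lam)" by simp
    also have "\<dots> \<le> 4 * (1 / real_of_int M powr lam)" using card by (intro mult_right_mono) auto
    finally show "(\<Sum>x\<in>{x \<in> F. \<bar>fst x\<bar> = M}. ?f x) \<le> 4 * (1 / real_of_int M powr lam)" .
  qed
  finally show ?thesis by (simp add: sum_distrib_left)
qed

lemma summable_on_infsum_le_if_finite_sums_le:
  fixes f :: "'a \<Rightarrow> real"
  assumes "\<And>x. x \<in> A \<Longrightarrow> 0 \<le> f x" "\<And>F. finite F \<Longrightarrow> F \<subseteq> A \<Longrightarrow> sum f F \<le> B"
  shows "f summable_on A \<and> infsum f A \<le> B"
proof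
  show "f summable_on A"
    using assms by (intro nonneg_bdd_above_summable_on bdd_aboveI[of _ B]) auto
  then show "infsum f A \<le> B" using assms(2) by (rule infsum_le_finite_sums)
qed

lemma sum_form_solutions_le_discriminant_powr:
  fixes a b c k :: int and F :: "(int \<times> int) set" and lam C :: real
  assumes "0 \<le> C"
    and pell_bound: "\<And>D K F. 2 \<le> D \<Longrightarrow> K \<noteq> 0 \<Longrightarrow> finite F \<Longrightarrow> F \<subseteq> pell_ms D K \<Longrightarrow>
      (\<Sum>m\<in>F. 1 / real_of_int m powr lam) \<le> C * real_of_int D powr ((1 + lam)/2)"
    and disc: "b^2 - 4*a*c > 0" "\<not> (\<exists>r. b^2 - 4*a*c = r^2)"
    and F: "finite F" "F \<subseteq> {(m, n). m \<noteq> 0 \<and> a*m^2 + b*m*n + c*n^2 = k}"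
  shows "(\<Sum>(m, n)\<in>F. 1 / \<bar>real_of_int m\<bar> powr lam) \<le> 4 * C * real_of_int (b^2 - 4*a*c) powr ((1 + lam)/2)"
proof (cases "k = 0")
  case True
  have "a*m^2 + b*m*n + c*n^2 \<noteq> 0" if "m \<noteq> 0" for m n
    using form_no_nontrivial_zero[OF disc(2) that] .
  then have "F = {}" using F(2) True by auto
  then show ?thesis using \<open>0 \<le> C\<close> by simp
next
  case False
  have "c \<noteq> 0" using disc(2) by auto
  have "b^2 - 4*a*c \<noteq> 1^2" using disc(2) by blast
  then have "2 \<le> b^2 - 4*a*c" using disc(1) by simp
  have "4*c*k \<noteq> 0" using False \<open>c \<noteq> 0\<close> by simp
  have "(\<Sum>M\<in>(\<lambda>x. \<bar>fst x\<bar>) ` F. 1 / real_of_int M powr lam)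
          \<le> C * real_of_int (b^2 - 4*a*c) powr ((1 + lam)/2)"
    using pell_bound[OF \<open>2 \<le> b^2 - 4*a*c\<close> \<open>4*c*k \<noteq> 0\<close> finite_imageI[OF F(1)]
        abs_fst_image_subset_pell_ms[OF F(2)]] .
  then show ?thesis
    using sum_form_solutions_le[OF \<open>c \<noteq> 0\<close> F, of lam] by (simp add: mult.assoc)
qed

theorem mainTheorem7:
  fixes lam :: real
  assumes "lam > 0"
  shows "\<exists>C::real. \<forall>a b c k :: int.
           b^2 - 4*a*c > 0 \<and> \<not> (\<exists>r::int. b^2 - 4*a*c = r^2) \<longrightarrow>
           (let A = {(m::int, n::int). m \<noteq> 0 \<and> a*m^2 + b*m*n + c*n^2 = k}
            in (\<lambda>(m, n). 1 / \<bar>real_of_int m\<bar> powr lam) summable_on A \<and>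
               (\<Sum>\<^sub>\<infinity>(m, n)\<in>A. 1 / \<bar>real_of_int m\<bar> powr lam)
                 \<le> C * real_of_int (b^2 - 4*a*c) powr ((1 + lam) / 2))"
proof -
  obtain C where "0 \<le> C" and C: "\<And>D K F. 2 \<le> D \<Longrightarrow> K \<noteq> 0 \<Longrightarrow> finite F \<Longrightarrow> F \<subseteq> pell_ms D K \<Longrightarrow>
      (\<Sum>m\<in>F. 1 / real_of_int m powr lam) \<le> C * real_of_int D powr ((1 + lam)/2)"
    using sum_inverse_powr_pell_ms_le_discriminant[OF assms] by blast
  show ?thesis
  proof (intro exI[of _ "4 * C"] allI impI, unfold Let_def, rule summable_on_infsum_le_if_finite_sums_le)
    fix a b c k :: int and F :: "(int \<times> int) set"
    assume "b^2 - 4*a*c > 0 \<and> \<not> (\<exists>r. b^2 - 4*a*c = r^2)"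
      and "finite F" "F \<subseteq> {(m, n). m \<noteq> 0 \<and> a*m^2 + b*m*n + c*n^2 = k}"
    then show "(\<Sum>(m, n)\<in>F. 1 / \<bar>real_of_int m\<bar> powr lam) \<le> 4 * C * real_of_int (b^2 - 4*a*c) powr ((1 + lam)/2)"
      by (intro sum_form_solutions_le_discriminant_powr[OF \<open>0 \<le> C\<close>]) (auto intro: C)
  qed auto
qed

end
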